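(* Let $k$ be an infinite field, $d>0$, $a\geq 7$ integers with $\gcd(a,d)=1$, $R=k[[t^a,t^{2a+d},t^{3a+3d},t^{4a+6d}]]$ with maximal ideal $\mathfrak{m}$, $I=(t^a)$, $F(I)=\bigoplus_{n\geq0}I^n/\mathfrak{m}I^n$ the fibre cone and $G_{\mathfrak{m}}=\bigoplus_{n\geq0}\mathfrak{m}^n/\mathfrak{m}^{n+1}$ the tangent cone. Then $G_{\mathfrak{m}}$ is a free graded $F(I)$-module and $$G_{\mathfrak{m}}\cong\bigoplus_{k=0}^{\lfloor a/6\rfloor+2}F(I)(-k)^{t_k},$$ where $t_k=\#\{i\mid 0\leq i\leq a-1,\ \mu_i+\nu_i+\xi_i=k\}$.
   Context: For $1\leq i\leq a-1$ write $i=6\mu_i+q_i$ with $0\leq q_i<6$, set $(\nu_i,\xi_i)=(1,q_i-3)$ if $q_i\geq3$ and $(\nu_i,\xi_i)=(0,q_i)$ if $q_i<3$; set $(\mu_0,\nu_0,\xi_0)=(0,0,0)$. $F(I)(-k)$ denotes the graded module $F(I)$ with degrees shifted by $k$. *)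

theory Defs
  imports "HOL-Computational_Algebra.Formal_Power_Series"
begin

definition semigrp :: "nat \<Rightarrow> nat \<Rightarrow> nat set" where
  "semigrp a d = {a*x1 + (2*a+d)*x2 + (3*a+3*d)*x3 + (4*a+6*d)*x4 | x1 x2 x3 x4. True}"

text \<open>R = k[[t^a, t^(2a+d), t^(3a+3d), t^(4a+6d)]] as the subring of k[[t]] of power series
  supported on the semigroup.\<close>
definition Rring :: "nat \<Rightarrow> nat \<Rightarrow> ('k::field) fps set" where
  "Rring a d = {f. \<forall>n. fps_nth f n \<noteq> 0 \<longrightarrow> n \<in> semigrp a d}"

definition max_ideal :: "nat \<Rightarrow> nat \<Rightarrow> ('k::field) fps set" where
  "max_ideal a d = {f \<in> Rring a d. fps_nth f 0 = 0}"

definition Iideal :: "nat \<Rightarrow> nat \<Rightarrow> ('k::field) fps set" where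
  "Iideal a d = {fps_X ^ a * f | f. f \<in> Rring a d}"

inductive_set ideal_prod :: "'a::comm_ring_1 set \<Rightarrow> 'a set \<Rightarrow> 'a set"
  for A B :: "'a set" where
  zero: "0 \<in> ideal_prod A B"
| add: "x \<in> A \<Longrightarrow> y \<in> B \<Longrightarrow> s \<in> ideal_prod A B \<Longrightarrow> x * y + s \<in> ideal_prod A B"

fun ideal_pow :: "'a::comm_ring_1 set \<Rightarrow> 'a set \<Rightarrow> nat \<Rightarrow> 'a set" where
  "ideal_pow R J 0 = R"
| "ideal_pow R J (Suc n) = ideal_prod (ideal_pow R J n) J"

text \<open>The homogeneous representatives b i (i < r), b i in m^(deg i), give a homogeneous
  basis of the tangent cone G_m = \<Oplus> m^n/m^(n+1) as a graded module over the fibre cone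
  F(I) = \<Oplus> I^n/(m I^n), where the class of c in I^j acts on the class of g in m^n by the
  class of c*g in m^(n+j).  This is the literal meaning of G_m being isomorphic, as a graded
  F(I)-module, to \<Oplus>_i F(I)(-deg i).\<close>
definition homog_basis ::
  "('k::field) fps set \<Rightarrow> 'k fps set \<Rightarrow> 'k fps set \<Rightarrow> nat \<Rightarrow> (nat \<Rightarrow> 'k fps) \<Rightarrow> (nat \<Rightarrow> nat) \<Rightarrow> bool" where
  "homog_basis R m I r b deg \<longleftrightarrow>
     (\<forall>i<r. b i \<in> ideal_pow R m (deg i)) \<and>
     \<comment> \<open>generation in every degree n\<close>
     (\<forall>n. \<forall>h \<in> ideal_pow R m n. \<exists>c. (\<forall>i<r. deg i \<le> n \<longrightarrow> c i \<in> ideal_pow R I (n - deg i)) \<and>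
          h - (\<Sum>i\<in>{i. i < r \<and> deg i \<le> n}. c i * b i) \<in> ideal_pow R m (Suc n)) \<and>
     \<comment> \<open>linear independence over F(I) in every degree n\<close>
     (\<forall>n c. (\<forall>i<r. deg i \<le> n \<longrightarrow> c i \<in> ideal_pow R I (n - deg i)) \<longrightarrow>
          (\<Sum>i\<in>{i. i < r \<and> deg i \<le> n}. c i * b i) \<in> ideal_pow R m (Suc n) \<longrightarrow>
          (\<forall>i<r. deg i \<le> n \<longrightarrow> c i \<in> ideal_prod m (ideal_pow R I (n - deg i))))"

text \<open>The numbers mu_i + nu_i + xi_i (with value 0 for i = 0).\<close>
definition wt :: "nat \<Rightarrow> nat" where
  "wt i = (let q = i mod 6 in i div 6 + (if q \<ge> 3 then 1 + (q - 3) else q))"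

definition tk :: "nat \<Rightarrow> nat \<Rightarrow> nat" where
  "tk a k = card {i. i \<le> a - 1 \<and> wt i = k}"

end

theory Submission
  imports Defs "HOL-Number_Theory.Cong"
begin

text \<open>Write S for the semigroup generated by a, 2a+d, 3a+3d, 4a+6d and call the order of s \<in> S
  the largest number of generators summing to s. Then m^n consists of the series supported on
  elements of order \<ge> n, and I^n = t^(na) R. Every s \<in> S is uniquely w_i + m a with i < a, where
  w_i = \<xi>_i (2a+d) + \<nu>_i (3a+3d) + \<mu>_i (4a+6d) is the Apery element of residue i d; a residue
  argument modulo a and modulo 6 shows that the order of w_i + m a is exactly
  \<mu>_i + \<nu>_i + \<xi>_i + m. Hence the monomials t^(w_i) of degree \<mu>_i + \<nu>_i + \<xi>_i form a
  homogeneous basis of the tangent cone over the fibre cone.\<close>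

unbundle fps_syntax

definition combo :: "nat \<Rightarrow> nat \<Rightarrow> nat \<Rightarrow> nat \<Rightarrow> nat \<Rightarrow> nat \<Rightarrow> nat" where
  "combo a d x1 x2 x3 x4 = a*x1 + (2*a+d)*x2 + (3*a+3*d)*x3 + (4*a+6*d)*x4"

definition gens :: "nat \<Rightarrow> nat \<Rightarrow> nat set" where
  "gens a d = {a, 2*a+d, 3*a+3*d, 4*a+6*d}"

lemma finite_gens: "finite (gens a d)"
  by (simp add: gens_def)

definition ord_ge :: "nat \<Rightarrow> nat \<Rightarrow> nat \<Rightarrow> nat set" where
  "ord_ge a d n = {combo a d x1 x2 x3 x4 | x1 x2 x3 x4. n \<le> x1+x2+x3+x4}"

lemma combo_eq: "combo a d x1 x2 x3 x4 = (x1+2*x2+3*x3+4*x4)*a + (x2+3*x3+6*x4)*d"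
  by (simp add: combo_def algebra_simps)

lemma ord_geI: "n \<le> x1+x2+x3+x4 \<Longrightarrow> combo a d x1 x2 x3 x4 \<in> ord_ge a d n"
  unfolding ord_ge_def by blast

lemma semigrp_eq_ord_ge_0: "semigrp a d = ord_ge a d 0"
  by (simp add: semigrp_def ord_ge_def combo_def)

lemma ord_ge_mono: "m \<le> n \<Longrightarrow> s \<in> ord_ge a d n \<Longrightarrow> s \<in> ord_ge a d m"
  unfolding ord_ge_def by force

lemma ord_ge_add:
  assumes "s \<in> ord_ge a d n" "t \<in> ord_ge a d m"
  shows "s + t \<in> ord_ge a d (n + m)"
proof -
  obtain x1 x2 x3 x4 where x: "s = combo a d x1 x2 x3 x4" "n \<le> x1+x2+x3+x4"
    using assms(1) by (auto simp: ord_ge_def)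
  obtain y1 y2 y3 y4 where y: "t = combo a d y1 y2 y3 y4" "m \<le> y1+y2+y3+y4"
    using assms(2) by (auto simp: ord_ge_def)
  have "s + t = combo a d (x1+y1) (x2+y2) (x3+y3) (x4+y4)"
    using x y by (simp add: combo_def algebra_simps)
  then show ?thesis using x y ord_geI[of "n + m"] by simp
qed

lemma ord_ge_Suc_if_nonzero: "s \<in> ord_ge a d 0 \<Longrightarrow> s \<noteq> 0 \<Longrightarrow> s \<in> ord_ge a d 1"
  unfolding ord_ge_def combo_def by (fastforce intro: Suc_leI)

lemma ord_ge_1_ge: "0 < a \<Longrightarrow> s \<in> ord_ge a d 1 \<Longrightarrow> a \<le> s"
  unfolding ord_ge_def combo_eq
  by (auto intro: order.trans[OF _ le_add1] simp: Suc_le_eq)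

lemma gens_ord_ge_1: "g \<in> gens a d \<Longrightarrow> g \<in> ord_ge a d 1"
  using ord_geI[of 1 1 0 0 0 a d] ord_geI[of 1 0 1 0 0 a d]
    ord_geI[of 1 0 0 1 0 a d] ord_geI[of 1 0 0 0 1 a d]
  by (auto simp: gens_def combo_def)

lemma ord_ge_Suc_cases:
  assumes "s \<in> ord_ge a d (Suc n)"
  shows "\<exists>g \<in> gens a d. g \<le> s \<and> s - g \<in> ord_ge a d n"
proof -
  obtain x1 x2 x3 x4 where x: "s = combo a d x1 x2 x3 x4" "Suc n \<le> x1+x2+x3+x4"
    using assms by (auto simp: ord_ge_def)
  consider y where "x1 = Suc y" | y where "x2 = Suc y" | y where "x3 = Suc y" | y where "x4 = Suc y"
    using x(2) by (metis add_is_0 not0_implies_Suc not_less_eq_eq zero_le)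
  then show ?thesis
  proof cases
    case (1 y)
    then have "s = a + combo a d y x2 x3 x4" using x by (simp add: combo_def)
    then show ?thesis using x 1 ord_geI[of n y x2 x3 x4 a d] by (simp add: gens_def)
  next
    case (2 y)
    then have "s = (2*a+d) + combo a d x1 y x3 x4" using x by (simp add: combo_def)
    then show ?thesis using x 2 ord_geI[of n x1 y x3 x4 a d] by (simp add: gens_def)
  next
    case (3 y)
    then have "s = (3*a+3*d) + combo a d x1 x2 y x4" using x by (simp add: combo_def)
    then show ?thesis using x 3 ord_geI[of n x1 x2 y x4 a d] by (simp add: gens_def)
  next
    case (4 y)
    then have "s = (4*a+6*d) + combo a d x1 x2 x3 y" using x by (simp add: combo_def)
    then show ?thesis using x 4 ord_geI[of n x1 x2 x3 y a d] by (simp add: gens_def)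
  qed
qed

definition mu :: "nat \<Rightarrow> nat" where "mu i = i div 6"
definition nu :: "nat \<Rightarrow> nat" where "nu i = (if i mod 6 < 3 then 0 else 1)"
definition xi :: "nat \<Rightarrow> nat" where "xi i = (if i mod 6 < 3 then i mod 6 else i mod 6 - 3)"

definition apery :: "nat \<Rightarrow> nat \<Rightarrow> nat \<Rightarrow> nat" where
  "apery a d i = combo a d 0 (xi i) (nu i) (mu i)"

lemma wt_eq: "wt i = xi i + nu i + mu i"
  by (simp add: wt_def xi_def nu_def mu_def Let_def)

lemma xi_nu_mu_sum: "xi i + 3 * nu i + 6 * mu i = i"
  by (simp add: xi_def nu_def mu_def)

lemma xi_le: "xi i \<le> 2" and nu_le: "nu i \<le> 1"
  by (auto simp: xi_def nu_def)

lemma apery_eq: "apery a d i = (2 * xi i + 3 * nu i + 4 * mu i) * a + i * d"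
proof -
  have "i * d = (xi i + 3 * nu i + 6 * mu i) * d" by (simp add: xi_nu_mu_sum)
  then show ?thesis by (simp add: apery_def combo_def algebra_simps)
qed

lemma apery_plus_ord_ge: "apery a d i + m * a \<in> ord_ge a d (wt i + m)"
proof -
  have "apery a d i + m * a = combo a d m (xi i) (nu i) (mu i)"
    by (simp add: apery_def combo_def algebra_simps)
  then show ?thesis using ord_geI[of "wt i + m"] by (simp add: wt_eq)
qed

text \<open>Among all (x2, x3, x4) with x2 + 3 x3 + 6 x4 = i, the triple (\<xi>_i, \<nu>_i, \<mu>_i) minimises
  both x2 + x3 and 4 x2 + 3 x3; a surplus j a \<ge> 7 in the residue dominates both bounds.\<close>
lemma xi_nu_minimal:
  fixes x2 x3 x4 :: nat
  assumes "x2 + 3*x3 + 6*x4 = i + j*a" "7 \<le> a"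
  shows "xi i + nu i \<le> x2 + x3 + j*a \<and> 4 * xi i + 3 * nu i \<le> 4*x2 + 3*x3 + 2*j*a"
proof (cases "j = 0")
  case True
  then have "i mod 6 = (x2 + 3*x3) mod 6"
    using assms(1) mod_mult_self2[of "x2 + 3*x3" 6 x4] by simp
  then have "xi i = xi (x2 + 3*x3)" "nu i = nu (x2 + 3*x3)" by (simp_all add: xi_def nu_def)
  moreover have "xi (x2 + 3*x3) + nu (x2 + 3*x3) \<le> x2 + x3 \<and>
      4 * xi (x2 + 3*x3) + 3 * nu (x2 + 3*x3) \<le> 4*x2 + 3*x3"
  proof (cases "x2 \<le> 2 \<and> x3 \<le> 3")
    case True
    then have "x2 \<in> {0,1,2}" "x3 \<in> {0,1,2,3}" by auto
    moreover have "\<forall>u\<in>{0,1,2}. \<forall>v\<in>{0,1,2,3::nat}. xi (u + 3*v) + nu (u + 3*v) \<le> u + v \<and>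
        4 * xi (u + 3*v) + 3 * nu (u + 3*v) \<le> 4*u + 3*v"
      by (simp add: xi_def nu_def)
    ultimately show ?thesis by blast
  qed (use xi_le[of "x2 + 3*x3"] nu_le[of "x2 + 3*x3"] in linarith)
  ultimately show ?thesis by simp
next
  case False
  then have "1 * a \<le> j * a" by (intro mult_le_mono1) simp
  then have "7 \<le> j*a" using assms(2) by linarith
  then show ?thesis using xi_le[of i] nu_le[of i] by linarith
qed

lemma mod_eq_if_coprime:
  fixes a d :: nat
  assumes "coprime a d" "X*a + J*d = Y*a + i*d"
  shows "J mod a = i mod a"
proof -
  have "(J*d) mod a = (i*d) mod a"
    using arg_cong[OF assms(2), of "\<lambda>x. x mod a"] by simp
  then have "[J = i] (mod a)"
    using cong_mult_rcancel_nat[of d a J i] assms(1) by (simp add: cong_def coprime_commute)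
  then show ?thesis by (simp add: cong_def)
qed

lemma apery_plus_eq_imp_eq:
  assumes "coprime a d" "i < a" "k < a" "apery a d i + m*a = apery a d k + m'*a"
  shows "i = k"
  using mod_eq_if_coprime[OF assms(1), of "2 * xi i + 3 * nu i + 4 * mu i + m" i
      "2 * xi k + 3 * nu k + 4 * mu k + m'" k] assms(2-4)
  by (simp add: apery_eq algebra_simps)

lemma apery_decomp:
  assumes "7 \<le> a" "s \<in> ord_ge a d 0"
  shows "\<exists>i<a. \<exists>m. s = apery a d i + m*a"
proof -
  obtain x1 x2 x3 x4 where s: "s = combo a d x1 x2 x3 x4"
    using assms(2) by (auto simp: ord_ge_def)
  define X where "X = x1 + 2*x2 + 3*x3 + 4*x4"
  define J where "J = x2 + 3*x3 + 6*x4"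
  define i where "i = J mod a"
  define j where "j = J div a"
  define A where "A = 2 * xi i + 3 * nu i + 4 * mu i"
  have J: "J = i + j*a" unfolding i_def j_def by simp
  have "A \<le> X + j*d"
    using xi_nu_minimal[OF J[unfolded J_def] assms(1)] xi_nu_mu_sum[of i] J
    unfolding A_def X_def J_def by linarith
  then have "A*a \<le> (X + j*d)*a" by (rule mult_le_mono1)
  have "s = X*a + J*d" using s unfolding X_def J_def combo_eq by simp
  also have "\<dots> = (X + j*d)*a + i*d" using J by (simp add: algebra_simps)
  also have "\<dots> = apery a d i + (X + j*d - A)*a"
    using \<open>A*a \<le> (X + j*d)*a\<close> by (simp add: apery_eq A_def diff_mult_distrib)
  finally have "s = apery a d i + (X + j*d - A)*a" .
  moreover have "i < a" using assms(1) unfolding i_def by simp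
  ultimately show ?thesis by blast
qed

lemma combo_eq_apery_plus_imp_le:
  assumes "coprime a d" "7 \<le> a" "i < a" "combo a d x1 x2 x3 x4 = apery a d i + m*a"
  shows "x1 + x2 + x3 + x4 \<le> wt i + m"
proof -
  define X where "X = x1 + 2*x2 + 3*x3 + 4*x4"
  define J where "J = x2 + 3*x3 + 6*x4"
  define A where "A = 2 * xi i + 3 * nu i + 4 * mu i"
  have eq: "X*a + J*d = (A+m)*a + i*d"
    using assms(4) unfolding X_def J_def A_def combo_eq apery_eq by (simp add: algebra_simps)
  define j where "j = J div a"
  have J: "J = i + j*a"
    using mod_eq_if_coprime[OF assms(1) eq] assms(3) div_mult_mod_eq[of J a]
    unfolding j_def by simp
  have "(X + j*d)*a = (A+m)*a" using eq J by (simp add: algebra_simps)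
  then have "X + j*d = A + m" using assms(2) by simp
  then show ?thesis
    using xi_nu_minimal[OF J[unfolded J_def] assms(2)] xi_nu_mu_sum[of i] J
    unfolding X_def A_def J_def wt_eq by linarith
qed

lemma apery_plus_ord_ge_iff:
  assumes "coprime a d" "7 \<le> a" "i < a"
  shows "apery a d i + m*a \<in> ord_ge a d n \<longleftrightarrow> n \<le> wt i + m"
proof
  assume "apery a d i + m*a \<in> ord_ge a d n"
  then obtain x1 x2 x3 x4 where "combo a d x1 x2 x3 x4 = apery a d i + m*a" "n \<le> x1+x2+x3+x4"
    by (auto simp: ord_ge_def)
  then show "n \<le> wt i + m" using combo_eq_apery_plus_imp_le[OF assms] by fastforce
qed (use ord_ge_mono apery_plus_ord_ge in blast)

text \<open>Exponent of t^(a (n - wt i)) t^(w_i), the i-th basis element moved to degree n.\<close>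
definition basis_exp :: "nat \<Rightarrow> nat \<Rightarrow> nat \<Rightarrow> nat \<Rightarrow> nat" where
  "basis_exp a d n i = apery a d i + (n - wt i) * a"

lemma basis_exp_inj:
  "coprime a d \<Longrightarrow> i < a \<Longrightarrow> k < a \<Longrightarrow> basis_exp a d n i = basis_exp a d n k \<Longrightarrow> i = k"
  unfolding basis_exp_def by (rule apery_plus_eq_imp_eq)

lemma basis_exp_ord_ge:
  assumes "coprime a d" "7 \<le> a" "i < a" "wt i \<le> n"
  shows "basis_exp a d n i \<in> ord_ge a d n" "basis_exp a d n i \<notin> ord_ge a d (Suc n)"
  using apery_plus_ord_ge_iff[OF assms(1-3)] assms(4) unfolding basis_exp_def by auto

lemma ord_ge_Suc_if_not_basis_exp:
  assumes "coprime a d" "7 \<le> a" "s \<in> ord_ge a d n"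
    and "\<forall>i<a. wt i \<le> n \<longrightarrow> s \<noteq> basis_exp a d n i"
  shows "s \<in> ord_ge a d (Suc n)"
proof -
  obtain i m where im: "i < a" "s = apery a d i + m*a"
    using apery_decomp[OF assms(2) ord_ge_mono[OF _ assms(3)]] by blast
  then have "n \<le> wt i + m" using apery_plus_ord_ge_iff[OF assms(1,2)] assms(3) by blast
  moreover have "wt i + m \<noteq> n" using assms(4) im unfolding basis_exp_def by force
  ultimately show ?thesis using apery_plus_ord_ge_iff[OF assms(1,2) im(1)] im(2) by simp
qed

lemma wt_le:
  assumes "i < a"
  shows "wt i \<le> a div 6 + 2"
proof -
  have "i div 6 \<le> a div 6" using assms by (simp add: div_le_mono)
  moreover have "i div 6 + 1 \<le> a div 6" if "i mod 6 = 5"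
  proof -
    have "i div 6 * 6 + 6 \<le> a" using assms that div_mult_mod_eq[of i 6] by linarith
    then show ?thesis using div_le_mono[of "(i div 6 + 1) * 6" a 6] by simp
  qed
  ultimately show ?thesis unfolding wt_def Let_def by (cases "i mod 6 = 5") auto
qed

lemma ideal_prod_add:
  "x \<in> ideal_prod A B \<Longrightarrow> y \<in> ideal_prod A B \<Longrightarrow> x + y \<in> ideal_prod A B"
proof (induction rule: ideal_prod.induct)
  case (add x1 y1 s)
  then show ?case using ideal_prod.add[of x1 A y1 B "s + y"] by (simp add: add.assoc)
qed simp

lemma ideal_prod_sum:
  "finite S \<Longrightarrow> (\<And>x. x \<in> S \<Longrightarrow> f x \<in> ideal_prod A B) \<Longrightarrow> sum f S \<in> ideal_prod A B"
  by (induction S rule: finite_induct) (auto intro: ideal_prod.zero ideal_prod_add)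

lemma ideal_prod_mult: "x \<in> A \<Longrightarrow> y \<in> B \<Longrightarrow> x * y \<in> ideal_prod A B"
  using ideal_prod.add[OF _ _ ideal_prod.zero] by fastforce

lemma fps_mult_nth_nonzero:
  fixes f g :: "'a::comm_ring_1 fps"
  assumes "(f * g) $ k \<noteq> 0"
  shows "\<exists>i\<le>k. f $ i \<noteq> 0 \<and> g $ (k - i) \<noteq> 0"
proof (rule ccontr)
  assume "\<not> ?thesis"
  then have "f $ i * g $ (k - i) = 0" if "i \<in> {0..k}" for i
    using that by (metis atLeastAtMost_iff mult_zero_left mult_zero_right)
  then show False using assms by (simp add: fps_mult_nth)
qed

lemma Rring_iff: "f \<in> Rring a d \<longleftrightarrow> (\<forall>s. f $ s \<noteq> 0 \<longrightarrow> s \<in> ord_ge a d 0)"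
  by (simp add: Rring_def semigrp_eq_ord_ge_0)

lemma fps_const_in_Rring: "fps_const c \<in> Rring a d"
  unfolding Rring_iff using ord_geI[of 0 0 0 0 0 a d] by (auto simp: combo_def)

lemma Rring_add: "f \<in> Rring a d \<Longrightarrow> g \<in> Rring a d \<Longrightarrow> f + g \<in> Rring a d"
  unfolding Rring_iff by (metis add.right_neutral fps_add_nth)

lemma Rring_mult:
  assumes "f \<in> Rring a d" "g \<in> Rring a d"
  shows "f * g \<in> Rring a d"
  unfolding Rring_iff
proof (intro allI impI)
  fix k assume "(f * g) $ k \<noteq> 0"
  then obtain i where "i \<le> k" "f $ i \<noteq> 0" "g $ (k - i) \<noteq> 0" using fps_mult_nth_nonzero by blast
  then show "k \<in> ord_ge a d 0" using assms ord_ge_add[of i a d 0 "k - i" 0] by (simp add: Rring_iff)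
qed

lemma fps_one_in_Rring: "1 \<in> Rring a d"
  using fps_const_in_Rring[of 1] by simp

lemma ideal_pow_Iideal:
  "ideal_pow (Rring a d) (Iideal a d) n = {fps_X ^ (n*a) * f | f :: 'k::field fps. f \<in> Rring a d}"
proof (induction n)
  case 0
  show ?case by simp
next
  case (Suc n)
  show ?case
  proof (intro equalityI subsetI)
    fix z :: "'k fps"
    assume "z \<in> ideal_pow (Rring a d) (Iideal a d) (Suc n)"
    then have "z \<in> ideal_prod (ideal_pow (Rring a d) (Iideal a d) n) (Iideal a d)" by simp
    then show "z \<in> {fps_X ^ (Suc n*a) * f | f. f \<in> Rring a d}"
    proof (induction rule: ideal_prod.induct)
      case zero
      have "(0 :: 'k fps) = fps_X ^ (Suc n*a) * 0" "(0 :: 'k fps) \<in> Rring a d"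
        using fps_const_in_Rring[of 0] by simp_all
      then show ?case by blast
    next
      case (add x y s)
      obtain f where f: "x = fps_X ^ (n*a) * f" "f \<in> Rring a d" using add.hyps(1) Suc.IH by auto
      obtain g where g: "y = fps_X ^ a * g" "g \<in> Rring a d" using add.hyps(2) by (auto simp: Iideal_def)
      obtain h where h: "s = fps_X ^ (Suc n*a) * h" "h \<in> Rring a d" using add.IH by auto
      have "x*y + s = fps_X ^ (Suc n*a) * (f*g + h)"
        using f g h by (simp add: power_add algebra_simps)
      moreover have "f*g + h \<in> Rring a d" using f g h Rring_mult Rring_add by blast
      ultimately show ?case by blast
    qed
  next
    fix z :: "'k fps"
    assume "z \<in> {fps_X ^ (Suc n*a) * f | f. f \<in> Rring a d}"
    then obtain f where f: "z = fps_X ^ (Suc n*a) * f" "f \<in> Rring a d" by blast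
    have "fps_X ^ (n*a) * f \<in> ideal_pow (Rring a d) (Iideal a d) n" using Suc.IH f(2) by blast
    moreover have "fps_X ^ a * 1 \<in> (Iideal a d :: 'k fps set)"
      unfolding Iideal_def using fps_one_in_Rring by blast
    moreover have "z = fps_X ^ (n*a) * f * (fps_X ^ a * 1)" using f(1) by (simp add: power_add ac_simps)
    ultimately show "z \<in> ideal_pow (Rring a d) (Iideal a d) (Suc n)" using ideal_prod_mult by simp
  qed
qed

lemma max_ideal_pow_support:
  "f \<in> ideal_pow (Rring a d) (max_ideal a d :: 'k::field fps set) n \<Longrightarrow> f $ s \<noteq> 0
    \<Longrightarrow> s \<in> ord_ge a d n"
proof (induction n arbitrary: f s)
  case 0
  then show ?case by (simp add: Rring_iff)
next
  case (Suc n)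
  from Suc.prems(1) have "f \<in> ideal_prod (ideal_pow (Rring a d) (max_ideal a d) n) (max_ideal a d)"
    by simp
  then show ?case using Suc.prems(2)
  proof (induction arbitrary: s rule: ideal_prod.induct)
    case (add x y t)
    show ?case
    proof (cases "t $ s = 0")
      case True
      then obtain i where "i \<le> s" "x $ i \<noteq> 0" "y $ (s - i) \<noteq> 0"
        using add.prems fps_mult_nth_nonzero[of x y s] by auto
      moreover have "s - i \<noteq> 0" using \<open>y $ (s - i) \<noteq> 0\<close> add.hyps(2) by (auto simp: max_ideal_def)
      ultimately have "i \<in> ord_ge a d n" "s - i \<in> ord_ge a d 1"
        using Suc.IH add.hyps ord_ge_Suc_if_nonzero by (auto simp: max_ideal_def Rring_iff)
      from ord_ge_add[OF this] show ?thesis using \<open>i \<le> s\<close> by simp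
    qed (use add.IH in blast)
  qed simp
qed

lemma fps_X_power_in_max_ideal:
  "0 < a \<Longrightarrow> g \<in> ord_ge a d 1 \<Longrightarrow> (fps_X ^ g :: 'k::field fps) \<in> max_ideal a d"
  using ord_ge_1_ge[of a g d] ord_ge_mono[of 0 1 g a d]
  by (auto simp: max_ideal_def Rring_iff)

lemma support_imp_max_ideal_pow:
  assumes "0 < a" "\<forall>s. f $ s \<noteq> 0 \<longrightarrow> s \<in> ord_ge a d n"
  shows "f \<in> ideal_pow (Rring a d) (max_ideal a d :: 'k::field fps set) n"
  using assms(2)
proof (induction n arbitrary: f)
  case 0
  then show ?case by (simp add: Rring_iff)
next
  case (Suc n)
  define pick where "pick s = (SOME g. g \<in> gens a d \<and> g \<le> s \<and> s - g \<in> ord_ge a d n)" for s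
  have pick: "pick s \<in> gens a d \<and> pick s \<le> s \<and> s - pick s \<in> ord_ge a d n" if "f $ s \<noteq> 0" for s
    unfolding pick_def by (rule someI_ex) (use ord_ge_Suc_cases Suc.prems that in blast)
  text \<open>Split f according to a generator that can be removed from each exponent.\<close>
  define part where "part g = Abs_fps (\<lambda>k. if pick (k + g) = g then f $ (k + g) else 0)" for g
  have part_pow: "part g \<in> ideal_pow (Rring a d) (max_ideal a d) n" for g
  proof (rule Suc.IH, intro allI impI)
    fix k
    assume "part g $ k \<noteq> 0"
    then have "f $ (k + g) \<noteq> 0" "pick (k + g) = g" by (auto simp: part_def split: if_splits)
    then show "k \<in> ord_ge a d n" using pick[of "k + g"] by simp
  qed
  have parts: "part g * fps_X ^ g \<in> ideal_pow (Rring a d) (max_ideal a d) (Suc n)"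
    if "g \<in> gens a d" for g
    using ideal_prod_mult[OF part_pow fps_X_power_in_max_ideal[OF assms(1) gens_ord_ge_1[OF that]]]
    by simp
  have "f = (\<Sum>g\<in>gens a d. part g * fps_X ^ g)"
  proof (rule fps_ext)
    fix s
    have "(part g * fps_X ^ g) $ s = (if g = pick s then f $ s else 0)" for g
      using pick[of s] by (cases "f $ s = 0") (auto simp: fps_X_power_mult_right_nth part_def)
    then have "(\<Sum>g\<in>gens a d. part g * fps_X ^ g) $ s
        = (\<Sum>g\<in>gens a d. if g = pick s then f $ s else 0)"
      by (simp add: fps_sum_nth)
    also have "\<dots> = f $ s"
      using pick[of s] by (cases "f $ s = 0") (simp_all add: finite_gens)
    finally show "f $ s = (\<Sum>g\<in>gens a d. part g * fps_X ^ g) $ s" ..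
  qed
  then show ?case
    using ideal_prod_sum[OF finite_gens, where f = "\<lambda>g. part g * fps_X ^ g"] parts by simp
qed

lemma max_ideal_pow_iff:
  "0 < a \<Longrightarrow> f \<in> ideal_pow (Rring a d) (max_ideal a d :: 'k::field fps set) n
    \<longleftrightarrow> (\<forall>s. f $ s \<noteq> 0 \<longrightarrow> s \<in> ord_ge a d n)"
  using max_ideal_pow_support support_imp_max_ideal_pow by blast

lemma apery_monomial_in_max_ideal_pow:
  "0 < a \<Longrightarrow> (fps_X ^ apery a d i :: 'k::field fps) \<in> ideal_pow (Rring a d) (max_ideal a d) (wt i)"
  using apery_plus_ord_ge[of a d i 0] by (simp add: max_ideal_pow_iff)

text \<open>Distinct basis exponents of degree n differ by no nonzero element of S, since that
  would raise the order of the larger one to n + 1.\<close>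
lemma coeff_sum_basis_monomials:
  fixes g :: "nat \<Rightarrow> 'k::field fps"
  assumes "coprime a d" "7 \<le> a" "A \<subseteq> {j. j < a \<and> wt j \<le> n}" "i \<in> A"
    and "\<forall>j\<in>A. g j \<in> Rring a d"
  shows "(\<Sum>j\<in>A. fps_X ^ basis_exp a d n j * g j) $ basis_exp a d n i = g i $ 0"
proof -
  let ?e = "basis_exp a d n"
  have i: "i < a" "wt i \<le> n" using assms(3,4) by auto
  have off_diag: "(fps_X ^ ?e j * g j) $ ?e i = 0" if "j \<in> A" "j \<noteq> i" for j
  proof (rule ccontr)
    have j: "j < a" "wt j \<le> n" using assms(3) that(1) by auto
    assume "(fps_X ^ ?e j * g j) $ ?e i \<noteq> 0"
    then have le: "?e j \<le> ?e i" and nz: "g j $ (?e i - ?e j) \<noteq> 0"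
      by (auto simp: fps_X_power_mult_nth split: if_splits)
    have "?e i - ?e j \<in> ord_ge a d 0"
      using nz assms(5) that(1) unfolding Rring_iff by blast
    moreover have "?e i \<noteq> ?e j" using basis_exp_inj[OF assms(1) i(1) j(1)] that(2) by blast
    ultimately have "?e i - ?e j \<in> ord_ge a d 1" using le ord_ge_Suc_if_nonzero by simp
    from ord_ge_add[OF basis_exp_ord_ge(1)[OF assms(1,2) j] this]
    have "?e i \<in> ord_ge a d (Suc n)" using le by simp
    then show False using basis_exp_ord_ge(2)[OF assms(1,2) i] by blast
  qed
  have "(fps_X ^ ?e j * g j) $ ?e i = (if j = i then g i $ 0 else 0)" if "j \<in> A" for j
    using off_diag[OF that] by (cases "j = i") (simp_all add: fps_X_power_mult_nth)
  then have "(\<Sum>j\<in>A. fps_X ^ ?e j * g j) $ ?e i = (\<Sum>j\<in>A. if j = i then g i $ 0 else 0)"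
    unfolding fps_sum_nth by (rule sum.cong[OF refl])
  also have "\<dots> = g i $ 0"
    using assms(4) finite_subset[OF assms(3)] by (simp add: sum.delta)
  finally show ?thesis .
qed

lemma tangent_cone_spanned:
  fixes h :: "'k::field fps"
  assumes "coprime a d" "7 \<le> a" "h \<in> ideal_pow (Rring a d) (max_ideal a d) n"
  shows "\<exists>c. (\<forall>i<a. wt i \<le> n \<longrightarrow> c i \<in> ideal_pow (Rring a d) (Iideal a d) (n - wt i)) \<and>
           h - (\<Sum>i\<in>{i. i < a \<and> wt i \<le> n}. c i * fps_X ^ apery a d i)
             \<in> ideal_pow (Rring a d) (max_ideal a d) (Suc n)"
proof -
  define A where "A = {i. i < a \<and> wt i \<le> n}"
  let ?e = "basis_exp a d n"
  define c where "c i = fps_X ^ ((n - wt i) * a) * fps_const (h $ ?e i)" for i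
  have c_mult: "c i * fps_X ^ apery a d i = fps_X ^ ?e i * fps_const (h $ ?e i)" for i
    unfolding c_def basis_exp_def by (simp add: power_add ac_simps)
  have "k \<in> ord_ge a d (Suc n)" if nz: "(h - (\<Sum>i\<in>A. c i * fps_X ^ apery a d i)) $ k \<noteq> 0" for k
  proof (cases "\<exists>i\<in>A. k = ?e i")
    case True
    then obtain i where "i \<in> A" "k = ?e i" by blast
    then have "(\<Sum>j\<in>A. c j * fps_X ^ apery a d j) $ k = h $ k"
      using coeff_sum_basis_monomials[OF assms(1,2), of A n i "\<lambda>j. fps_const (h $ ?e j)"]
      by (simp add: c_mult A_def fps_const_in_Rring)
    then show ?thesis using nz by simp
  next
    case False
    then have "(c j * fps_X ^ apery a d j) $ k = 0" if "j \<in> A" for j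
      using that by (simp add: c_mult fps_X_power_mult_nth)
    then have "(\<Sum>j\<in>A. c j * fps_X ^ apery a d j) $ k = 0"
      unfolding fps_sum_nth by (intro sum.neutral) blast
    then have "k \<in> ord_ge a d n" using nz max_ideal_pow_support[OF assms(3)] by simp
    then show ?thesis
      using ord_ge_Suc_if_not_basis_exp[OF assms(1,2)] False unfolding A_def by blast
  qed
  then have "h - (\<Sum>i\<in>A. c i * fps_X ^ apery a d i) \<in> ideal_pow (Rring a d) (max_ideal a d) (Suc n)"
    by (intro support_imp_max_ideal_pow) (use assms(2) in auto)
  moreover have "c i \<in> ideal_pow (Rring a d) (Iideal a d) (n - wt i)" for i
    unfolding c_def ideal_pow_Iideal using fps_const_in_Rring by blast
  ultimately show ?thesis unfolding A_def by blast
qed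

lemma tangent_cone_independent:
  fixes c :: "nat \<Rightarrow> 'k::field fps"
  assumes "coprime a d" "7 \<le> a"
    and c: "\<forall>i<a. wt i \<le> n \<longrightarrow> c i \<in> ideal_pow (Rring a d) (Iideal a d) (n - wt i)"
    and sum: "(\<Sum>i\<in>{i. i < a \<and> wt i \<le> n}. c i * fps_X ^ apery a d i)
                \<in> ideal_pow (Rring a d) (max_ideal a d) (Suc n)"
    and i: "i < a" "wt i \<le> n"
  shows "c i \<in> ideal_prod (max_ideal a d) (ideal_pow (Rring a d) (Iideal a d) (n - wt i))"
proof -
  define A where "A = {i. i < a \<and> wt i \<le> n}"
  let ?e = "basis_exp a d n"
  obtain g where g: "\<forall>j\<in>A. c j = fps_X ^ ((n - wt j) * a) * g j \<and> g j \<in> Rring a d"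
    using bchoice[of A "\<lambda>j f. c j = fps_X ^ ((n - wt j) * a) * f \<and> f \<in> Rring a d"] c
    unfolding A_def ideal_pow_Iideal by blast
  have "(\<Sum>j\<in>A. c j * fps_X ^ apery a d j) = (\<Sum>j\<in>A. fps_X ^ ?e j * g j)"
    using g by (intro sum.cong) (simp_all add: basis_exp_def power_add ac_simps)
  then have "(\<Sum>j\<in>A. c j * fps_X ^ apery a d j) $ ?e i = g i $ 0"
    using coeff_sum_basis_monomials[OF assms(1,2), of A n i g] g i by (simp add: A_def)
  moreover have "?e i \<notin> ord_ge a d (Suc n)" using basis_exp_ord_ge(2)[OF assms(1,2) i] .
  ultimately have "g i $ 0 = 0"
    using max_ideal_pow_support[OF sum[folded A_def], of "?e i"] by auto
  then have "g i \<in> max_ideal a d" using g i by (simp add: A_def max_ideal_def)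
  moreover have "fps_X ^ ((n - wt i) * a) * 1 \<in> ideal_pow (Rring a d) (Iideal a d) (n - wt i)"
    unfolding ideal_pow_Iideal using fps_const_in_Rring[of 1] by force
  ultimately have "g i * (fps_X ^ ((n - wt i) * a) * 1)
      \<in> ideal_prod (max_ideal a d) (ideal_pow (Rring a d) (Iideal a d) (n - wt i))"
    by (rule ideal_prod_mult)
  moreover have "c i = g i * (fps_X ^ ((n - wt i) * a) * 1)" using g i by (simp add: A_def mult.commute)
  ultimately show ?thesis by simp
qed

theorem corollary6p7:
  fixes a d :: nat
  assumes "infinite (UNIV :: 'k::field set)"
    and "d > 0" and "a \<ge> 7" and "coprime a d"
  shows "\<exists>r (b :: nat \<Rightarrow> 'k fps) deg.
           homog_basis (Rring a d) (max_ideal a d) (Iideal a d) r b deg \<and>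
           (\<forall>i<r. deg i \<le> a div 6 + 2) \<and>
           (\<forall>k \<le> a div 6 + 2. card {i. i < r \<and> deg i = k} = tk a k)"
proof (intro exI conjI allI impI)
  have "0 < a" using assms(3) by simp
  show "homog_basis (Rring a d) (max_ideal a d) (Iideal a d) a (\<lambda>i. fps_X ^ apery a d i :: 'k fps) wt"
    unfolding homog_basis_def
    using apery_monomial_in_max_ideal_pow[OF \<open>0 < a\<close>] tangent_cone_spanned[OF assms(4,3)]
      tangent_cone_independent[OF assms(4,3)]
    by blast
  show "wt i \<le> a div 6 + 2" if "i < a" for i using wt_le[OF that] .
  show "card {i. i < a \<and> wt i = k} = tk a k" for k
  proof -
    have "i < a \<longleftrightarrow> i \<le> a - 1" for i using assms(3) by linarith
    then show ?thesis unfolding tk_def by simp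
  qed
qed

end
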